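(* Let $E$ be a finite directed graph and $X\subseteq\mathrm{Sink}(E)\cup\mathrm{Source}(E)$. Then $\mathrm{h}_{\mathrm{alg}}(KE)=\mathrm{h}_{\mathrm{alg}}(K(E\setminus X))$.
   Context: For a finite directed graph $E=(E^0,E^1,s,r)$, a sink is a vertex $v$ with $s^{-1}(v)=\emptyset$ and a source is a vertex $v$ with $r^{-1}(v)=\emptyset$. $E\setminus X$ is the graph with vertex set $E^0\setminus X$ and edge set $E^1$ minus all edges having source or range in $X$. The path algebra $KF$ has basis the paths of $F$ (vertices as length-0 paths) with concatenation product; standard filtration $V_n=$ span of paths of length $\le n$; $\mathrm{h}_{\mathrm{alg}}(KF)=0$ if $KF$ is finite-dimensional and $\limsup_n\frac1n\log\dim(V_n/V_{n-1})$ otherwise. *)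

theory Defs
  imports "HOL-Analysis.Analysis"
begin

record ('v, 'e) dgraph =
  verts :: "'v set"
  arcs  :: "'e set"
  src   :: "'e \<Rightarrow> 'v"
  rng   :: "'e \<Rightarrow> 'v"

definition finite_dgraph :: "('v, 'e) dgraph \<Rightarrow> bool" where
  "finite_dgraph G \<longleftrightarrow> finite (verts G) \<and> finite (arcs G) \<and>
     (\<forall>e \<in> arcs G. src G e \<in> verts G \<and> rng G e \<in> verts G)"

definition sinks :: "('v, 'e) dgraph \<Rightarrow> 'v set" where
  "sinks G = {v \<in> verts G. \<not> (\<exists>e \<in> arcs G. src G e = v)}"

definition sources :: "('v, 'e) dgraph \<Rightarrow> 'v set" where
  "sources G = {v \<in> verts G. \<not> (\<exists>e \<in> arcs G. rng G e = v)}"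

definition remove_verts :: "('v, 'e) dgraph \<Rightarrow> 'v set \<Rightarrow> ('v, 'e) dgraph" where
  "remove_verts G X = \<lparr> verts = verts G - X,
     arcs = {e \<in> arcs G. src G e \<notin> X \<and> rng G e \<notin> X},
     src = src G, rng = rng G \<rparr>"

definition edge_paths :: "('v, 'e) dgraph \<Rightarrow> 'e list set" where
  "edge_paths G = {es. es \<noteq> [] \<and> set es \<subseteq> arcs G \<and>
     (\<forall>i. Suc i < length es \<longrightarrow> rng G (es ! i) = src G (es ! Suc i))}"

text \<open>The basis of the path algebra KF: all paths of F (vertices as length-0 paths).\<close>
definition paths :: "('v, 'e) dgraph \<Rightarrow> ('v + 'e list) set" where
  "paths G = Inl ` verts G \<union> Inr ` edge_paths G"

fun path_length :: "'v + 'e list \<Rightarrow> nat" where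
  "path_length (Inl v) = 0"
| "path_length (Inr es) = length es"

text \<open>dim (V_n / V_(n-1)) for the standard filtration V_n = span of paths of length \<le> n:
  since the paths form a basis, this is the number of paths of length exactly n.\<close>
definition layer_dim :: "('v, 'e) dgraph \<Rightarrow> nat \<Rightarrow> nat" where
  "layer_dim G n = card {p \<in> paths G. path_length p = n}"

definition h_alg :: "('v, 'e) dgraph \<Rightarrow> ereal" where
  "h_alg G = (if finite (paths G) then 0
              else limsup (\<lambda>n. ereal (ln (real (layer_dim G n)) / real n)))"

end

theory Submission
  imports Defs
begin

(* Every interior vertex of a path is the range of one of its edges and the source of the next,
  so it is neither a sink nor a source. Deleting X therefore can only cut off the first and the
  last edge of a path: a path of E of length n >= 3 is u p w with p a path of E \ X of length
  n - 2, n - 1 or n, and u, w of length at most 1. Hence the n-th layer of E is bounded by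
  (|E^1| + 1)^2 times the sum of the layers n - 2, n - 1, n of E \ X, and from below by the n-th
  layer of E \ X; neither a constant factor nor a bounded index shift changes the exponential
  growth rate limsup ln(d_n)/n. If KF is finite-dimensional its layers eventually vanish, and as
  ln 0 = 0 in HOL the growth rate is then 0, so h_alg is this growth rate in every case. *)

definition growth_rate :: "(nat \<Rightarrow> nat) \<Rightarrow> ereal" where
  "growth_rate a = limsup (\<lambda>n. ereal (ln (real (a n)) / real n))"

lemma ln_of_nat_mono: "m \<le> n \<Longrightarrow> ln (real m) \<le> ln (real n)"
  by (cases "m = 0"; cases "n = 0") auto

lemma growth_rate_mono: "(\<And>n. a n \<le> b n) \<Longrightarrow> growth_rate a \<le> growth_rate b"
  unfolding growth_rate_def
  by (intro Limsup_mono always_eventually allI) (simp add: divide_right_mono ln_of_nat_mono)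

lemma growth_rate_nonneg: "0 \<le> growth_rate a"
  using growth_rate_mono[of "\<lambda>_. 0" a] by (simp add: growth_rate_def Limsup_const zero_ereal_def)

lemma growth_rate_eventually_zero:
  assumes "\<forall>\<^sub>F n in sequentially. a n = 0"
  shows "growth_rate a = 0"
proof -
  have "\<forall>\<^sub>F n in sequentially. ereal (ln (real (a n)) / real n) = 0"
    using assms by eventually_elim simp
  from Limsup_eq[OF this] show ?thesis
    unfolding growth_rate_def by (simp add: Limsup_const)
qed

lemma less_exp_if_ln_div_less:
  assumes "ln (real m) / real n < z" and "0 < n"
  shows "real m < exp (z * real n)"
proof (cases "m = 0")
  case False
  then have "ln (real m) < z * real n" using assms by (simp add: pos_divide_less_eq)
  then show ?thesis using False by (metis exp_less_mono exp_ln of_nat_0_less_iff neq0_conv)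
qed simp

lemma eventually_window_sum_le_exp:
  fixes a :: "nat \<Rightarrow> nat"
  assumes a_less: "growth_rate a < ereal z" and "0 < z"
  shows "\<forall>\<^sub>F n in sequentially. (\<Sum>k=n-c..n. real (a k)) \<le> real (c + 1) * exp (z * real n)"
proof -
  obtain N where N: "\<And>k. N \<le> k \<Longrightarrow> ln (real (a k)) / real k < z"
    using Limsup_lessD[OF a_less[unfolded growth_rate_def]]
    by (auto simp: eventually_sequentially)
  show ?thesis
    using eventually_ge_at_top[of "N + c + 1"]
  proof eventually_elim
    case (elim n)
    have "real (a k) \<le> exp (z * real n)" if "k \<in> {n-c..n}" for k
    proof -
      have "real (a k) < exp (z * real k)"
        using that elim by (intro less_exp_if_ln_div_less N) auto
      also have "\<dots> \<le> exp (z * real n)" using that \<open>0 < z\<close> by simp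
      finally show ?thesis by simp
    qed
    then have "(\<Sum>k=n-c..n. real (a k)) \<le> real (card {n-c..n}) * exp (z * real n)"
      by (rule sum_bounded_above)
    also have "card {n-c..n} = c + 1" using elim by simp
    finally show ?case .
  qed
qed

lemma eventually_ln_div_less_if_le_exp:
  fixes b :: "nat \<Rightarrow> nat"
  assumes b_le: "\<forall>\<^sub>F n in sequentially. real (b n) \<le> C * exp (z * real n)"
    and "0 < z" "z < r"
  shows "\<forall>\<^sub>F n in sequentially. ln (real (b n)) / real n < r"
proof -
  have "\<forall>\<^sub>F n in sequentially. ln C / real n + z < r"
    by (rule order_tendstoD(2)[OF _ \<open>z < r\<close>]) (auto intro!: tendsto_eq_intros)
  with b_le show ?thesis using eventually_gt_at_top[of 0]
  proof eventually_elim
    case (elim n)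
    show ?case
    proof (cases "b n = 0")
      case False
      then have "0 < C * exp (z * real n)" using elim(1) by linarith
      then have "0 < C" by (simp add: zero_less_mult_iff)
      have "ln (real (b n)) \<le> ln (C * exp (z * real n))"
        using elim(1) False by simp
      also have "\<dots> = ln C + z * real n" using \<open>0 < C\<close> by (simp add: ln_mult)
      finally have "ln (real (b n)) / real n \<le> (ln C + z * real n) / real n"
        by (simp add: divide_right_mono)
      also have "\<dots> = ln C / real n + z" using elim(3) by (simp add: add_divide_distrib)
      finally show ?thesis using elim(2) by simp
    qed (use \<open>0 < z\<close> \<open>z < r\<close> in simp)
  qed
qed

lemma growth_rate_le_window:
  fixes a b :: "nat \<Rightarrow> nat" and c D :: nat
  assumes bound: "\<forall>\<^sub>F n in sequentially. b n \<le> D * (\<Sum>k=n-c..n. a k)"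
  shows "growth_rate b \<le> growth_rate a"
  unfolding Limsup_le_iff growth_rate_def[of b]
proof (intro allI impI)
  fix y assume "growth_rate a < y"
  then obtain z where z: "growth_rate a < ereal z" "ereal z < y"
    using ereal_dense2 by blast
  have "0 < z" using z(1) growth_rate_nonneg[of a] by (metis ereal_less(2) order_le_less_trans)
  have b_le: "\<forall>\<^sub>F n in sequentially. real (b n) \<le> real D * real (c + 1) * exp (z * real n)"
    using bound eventually_window_sum_le_exp[OF z(1) \<open>0 < z\<close>, of c]
  proof eventually_elim
    case (elim n)
    then have "real (b n) \<le> real D * (\<Sum>k=n-c..n. real (a k))"
      by (metis of_nat_le_iff of_nat_mult of_nat_sum)
    also have "\<dots> \<le> real D * (real (c + 1) * exp (z * real n))"
      using elim(2) by (rule mult_left_mono) simp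
    finally show ?case by (simp add: mult.assoc)
  qed
  show "\<forall>\<^sub>F n in sequentially. ereal (ln (real (b n)) / real n) < y"
  proof (cases y)
    case (real r)
    with z(2) have "z < r" by simp
    from eventually_ln_div_less_if_le_exp[OF b_le \<open>0 < z\<close> this] show ?thesis
      using real by simp
  qed (use z in auto)
qed

definition edge_paths_of_length :: "('v, 'e) dgraph \<Rightarrow> nat \<Rightarrow> 'e list set" where
  "edge_paths_of_length G n = {es \<in> edge_paths G. length es = n}"

lemma edge_paths_successively:
  "edge_paths G = {es. es \<noteq> [] \<and> set es \<subseteq> arcs G \<and>
     successively (\<lambda>e e'. rng G e = src G e') es}"
  by (auto simp: edge_paths_def successively_conv_nth)

lemma edge_paths_infix: "u @ p @ w \<in> edge_paths G \<Longrightarrow> p \<noteq> [] \<Longrightarrow> p \<in> edge_paths G"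
  by (auto simp: edge_paths_successively successively_append_iff)

lemma edge_paths_remove_verts_iff:
  "es \<in> edge_paths (remove_verts G X) \<longleftrightarrow>
     es \<in> edge_paths G \<and> (\<forall>e\<in>set es. src G e \<notin> X \<and> rng G e \<notin> X)"
  by (auto simp: edge_paths_def remove_verts_def)

lemma paths_remove_verts_subset: "paths (remove_verts G X) \<subseteq> paths G"
proof -
  have "verts (remove_verts G X) \<subseteq> verts G" by (auto simp: remove_verts_def)
  moreover have "edge_paths (remove_verts G X) \<subseteq> edge_paths G"
    by (auto simp: edge_paths_remove_verts_iff)
  ultimately show ?thesis unfolding paths_def by blast
qed

lemma edge_path_inner_vertices:
  assumes "u @ e # w \<in> edge_paths G"
  shows "u \<noteq> [] \<Longrightarrow> src G e \<notin> sinks G \<union> sources G"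
    and "w \<noteq> [] \<Longrightarrow> rng G e \<notin> sinks G \<union> sources G"
proof -
  have e: "e \<in> arcs G" using assms by (auto simp: edge_paths_def)
  show "src G e \<notin> sinks G \<union> sources G" if "u \<noteq> []"
  proof -
    have "last u \<in> arcs G" "rng G (last u) = src G e"
      using assms that last_in_set[of u]
      by (auto simp: edge_paths_successively successively_append_iff)
    then show ?thesis using e by (auto simp: sinks_def sources_def)
  qed
  show "rng G e \<notin> sinks G \<union> sources G" if "w \<noteq> []"
  proof -
    have "hd w \<in> arcs G" "rng G e = src G (hd w)"
      using assms that hd_in_set[of w]
      by (auto simp: edge_paths_successively successively_append_iff successively_Cons)
    then show ?thesis using e by (auto simp: sinks_def sources_def)
  qed
qed

lemma edge_path_decomp:
  assumes X: "X \<subseteq> sinks E \<union> sources E"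
    and es: "es \<in> edge_paths E" and len: "3 \<le> length es"
  obtains u p w where "es = u @ p @ w" "p \<in> edge_paths (remove_verts E X)"
    "set u \<subseteq> arcs E" "length u \<le> 1" "set w \<subseteq> arcs E" "length w \<le> 1"
proof -
  obtain e rest where "es = e # rest" using len by (cases es) auto
  moreover obtain mid e' where "rest = mid @ [e']"
    using len \<open>es = e # rest\<close> by (cases rest rule: rev_cases) auto
  ultimately have es_eq: "es = e # mid @ [e']" and "mid \<noteq> []" using len by auto
  have mid_avoids: "src E x \<notin> X \<and> rng E x \<notin> X" if x: "x \<in> set mid" for x
  proof -
    obtain m1 m2 where "mid = m1 @ x # m2" using split_list[OF x] by blast
    then have "(e # m1) @ x # (m2 @ [e']) \<in> edge_paths E" using es es_eq by simp
    then show ?thesis using X edge_path_inner_vertices[of "e # m1" x "m2 @ [e']" E] by blast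
  qed
  have ends_inner: "rng E e \<notin> X" "src E e' \<notin> X"
    using X es es_eq \<open>mid \<noteq> []\<close> edge_path_inner_vertices[of "[]" e "mid @ [e']" E]
      edge_path_inner_vertices[of "e # mid" e' "[]" E] by auto
  define u where "u = (if src E e \<in> X then [e] else [])"
  define w where "w = (if rng E e' \<in> X then [e'] else [])"
  define p where "p = (if src E e \<in> X then [] else [e]) @ mid @ (if rng E e' \<in> X then [] else [e'])"
  have split: "es = u @ p @ w" by (simp add: es_eq u_def p_def w_def)
  have "p \<noteq> []" using \<open>mid \<noteq> []\<close> by (simp add: p_def)
  then have "p \<in> edge_paths E" using es split edge_paths_infix by metis
  moreover have "\<forall>x\<in>set p. src E x \<notin> X \<and> rng E x \<notin> X"
    using mid_avoids ends_inner by (auto simp: p_def)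
  moreover have "set u \<subseteq> arcs E" "set w \<subseteq> arcs E"
    using es es_eq by (auto simp: u_def w_def edge_paths_def)
  ultimately show ?thesis
    using that[OF split] by (auto simp: edge_paths_remove_verts_iff u_def w_def)
qed

lemma card_lists_length_le_1:
  assumes "finite A"
  shows "card {u. set u \<subseteq> A \<and> length u \<le> 1} = card A + 1"
proof -
  have "{u. set u \<subseteq> A \<and> length u \<le> 1} = insert [] ((\<lambda>e. [e]) ` A)"
    by (auto simp: le_Suc_eq length_Suc_conv)
  then show ?thesis using assms by (simp add: card_insert_disjoint image_iff card_image inj_on_def)
qed

lemma finite_edge_paths_of_length: "finite (arcs G) \<Longrightarrow> finite (edge_paths_of_length G n)"
  by (rule finite_subset[OF _ finite_lists_length_eq[of "arcs G" n]])
     (auto simp: edge_paths_of_length_def edge_paths_def)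

lemma layer_dim_pos: "0 < n \<Longrightarrow> layer_dim G n = card (edge_paths_of_length G n)"
proof -
  assume "0 < n"
  then have "{p \<in> paths G. path_length p = n} = Inr ` edge_paths_of_length G n"
    by (auto simp: paths_def edge_paths_of_length_def)
  then show ?thesis unfolding layer_dim_def by (simp add: card_image)
qed

lemma layer_dim_remove_verts_le:
  assumes "finite_dgraph E"
  shows "layer_dim (remove_verts E X) n \<le> layer_dim E n"
proof -
  have "{p \<in> paths E. path_length p = n} \<subseteq> Inl ` verts E \<union> Inr ` edge_paths_of_length E n"
    by (auto simp: paths_def edge_paths_of_length_def)
  then have "finite {p \<in> paths E. path_length p = n}"
    by (rule finite_subset) (use assms in \<open>simp add: finite_dgraph_def finite_edge_paths_of_length\<close>)
  then show ?thesis
    unfolding layer_dim_def using paths_remove_verts_subset by (fastforce intro: card_mono)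
qed

lemma layer_dim_window_bound:
  assumes E: "finite_dgraph E" and X: "X \<subseteq> sinks E \<union> sources E" and n: "3 \<le> n"
  shows "layer_dim E n \<le> (card (arcs E) + 1)\<^sup>2 * (\<Sum>k=n-2..n. layer_dim (remove_verts E X) k)"
proof -
  let ?F = "remove_verts E X"
  define S where "S = {u. set u \<subseteq> arcs E \<and> length u \<le> 1}"
  define U where "U = (\<Union>k\<in>{n-2..n}. edge_paths_of_length ?F k)"
  have "finite (arcs E)" using E by (simp add: finite_dgraph_def)
  then have fin: "finite S" "finite U" "card S = card (arcs E) + 1"
    unfolding S_def U_def
    by (auto simp: finite_lists_length_le finite_edge_paths_of_length remove_verts_def
        card_lists_length_le_1[of "arcs E", simplified])
  have "edge_paths_of_length E n \<subseteq> (\<lambda>(u, p, w). u @ p @ w) ` (S \<times> U \<times> S)"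
  proof
    fix es assume "es \<in> edge_paths_of_length E n"
    then have es: "es \<in> edge_paths E" and "length es = n"
      by (auto simp: edge_paths_of_length_def)
    obtain u p w where "es = u @ p @ w" "p \<in> edge_paths ?F" "u \<in> S" "w \<in> S"
      by (rule edge_path_decomp[OF X es]) (use \<open>length es = n\<close> n in \<open>auto simp: S_def\<close>)
    moreover from this have "p \<in> U"
      using \<open>length es = n\<close> by (auto simp: U_def S_def edge_paths_of_length_def)
    ultimately show "es \<in> (\<lambda>(u, p, w). u @ p @ w) ` (S \<times> U \<times> S)" by force
  qed
  then have "card (edge_paths_of_length E n) \<le> card ((\<lambda>(u, p, w). u @ p @ w) ` (S \<times> U \<times> S))"
    using fin by (intro card_mono) auto
  also have "\<dots> \<le> card (S \<times> U \<times> S)"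
    using fin by (intro card_image_le) auto
  also have "\<dots> = (card (arcs E) + 1)\<^sup>2 * card U"
    using fin by (simp add: card_cartesian_product power2_eq_square algebra_simps)
  also have "card U \<le> (\<Sum>k=n-2..n. card (edge_paths_of_length ?F k))"
    unfolding U_def by (rule card_UN_le) simp
  also have "\<dots> = (\<Sum>k=n-2..n. layer_dim ?F k)"
    using n by (intro sum.cong) (auto simp: layer_dim_pos)
  finally show ?thesis using n by (simp add: layer_dim_pos)
qed

lemma h_alg_eq_growth_rate: "h_alg G = growth_rate (layer_dim G)"
proof (cases "finite (paths G)")
  case True
  then obtain N where N: "\<And>p. p \<in> paths G \<Longrightarrow> path_length p < N"
    by (metis finite_imageI finite_nat_set_iff_bounded imageI)
  have "layer_dim G n = 0" if "N \<le> n" for n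
  proof -
    have "{p \<in> paths G. path_length p = n} = {}" using N that by fastforce
    then show ?thesis unfolding layer_dim_def by (metis card.empty)
  qed
  then have "\<forall>\<^sub>F n in sequentially. layer_dim G n = 0"
    by (auto simp: eventually_sequentially)
  then show ?thesis using True by (simp add: h_alg_def growth_rate_eventually_zero)
qed (simp add: h_alg_def growth_rate_def)

theorem corollary5p5:
  fixes E :: "('v, 'e) dgraph" and X :: "'v set"
  assumes "finite_dgraph E"
    and "X \<subseteq> sinks E \<union> sources E"
  shows "h_alg E = h_alg (remove_verts E X)"
proof -
  let ?F = "remove_verts E X"
  have "\<forall>\<^sub>F n in sequentially.
      layer_dim E n \<le> (card (arcs E) + 1)\<^sup>2 * (\<Sum>k=n-2..n. layer_dim ?F k)"
    using eventually_ge_at_top[of 3] by eventually_elim (rule layer_dim_window_bound[OF assms])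
  then have "growth_rate (layer_dim E) \<le> growth_rate (layer_dim ?F)"
    by (rule growth_rate_le_window)
  moreover have "growth_rate (layer_dim ?F) \<le> growth_rate (layer_dim E)"
    by (intro growth_rate_mono layer_dim_remove_verts_le[OF assms(1)])
  ultimately show ?thesis by (simp add: h_alg_eq_growth_rate)
qed

end
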